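(* Let $p=\tfrac12$, $\mu=\mu_{1/2}$, and set $d_0=E_0$, $d_n=E_n-E_{n-1}$ for $n\ge1$. Then for every $m\ge0$, $$K_m=(2-2^{-m})d_0+\sum_{n=1}^m2^{-(n-1)}\big(1-2^{-(m-n+1)}\big)d_n.$$ In particular each subspace $\mathcal D_0=E_0L^2(\mu)=\mathrm{span}\{\phi\}$, $\mathcal D_n=d_nL^2(\mu)$ ($n\ge1$) is $K_m$-invariant, $K_m$ acts on $\mathcal D_n$ as multiplication by $\lambda_{n,m}$, where $\lambda_{0,m}=2-2^{-m}$ and $\lambda_{n,m}=2^{-(n-1)}(1-2^{-(m-n+1)})$ for $1\le n\le m$, and $K_m$ vanishes on $\mathcal D_n$ for $n\ge m+1$.
   Context: Let $S_0(x)=x/3$, $S_2(x)=(x+2)/3$ on $[0,1]$ and let $C$ be the middle-third Cantor set. $\mu=\mu_{1/2}$ is the unique Borel probability measure on $[0,1]$ with $\mu=\frac12\mu\circ S_0^{-1}+\frac12\mu\circ S_2^{-1}$. For words $w\in\{0,2\}^n$, $S_w=S_{w_1}\circ\cdots\circ S_{w_n}$, $C_w=S_w(C)$. $\phi=1_C$. Inner product $\langle f,g\rangle=\int\overline fg\,d\mu$. $K_mf=\sum_{|u|\le m}\langle1_{C_u},f\rangle1_{C_u}$, and $E_n$ is the conditional expectation onto the $\sigma$-algebra generated by $\{C_w:|w|=n\}$. *)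

theory Defs
  imports "HOL-Probability.Probability"
begin

definition Smap :: "nat \<Rightarrow> real \<Rightarrow> real" where
  "Smap d x = (x + real d) / 3"

fun Sw :: "nat list \<Rightarrow> real \<Rightarrow> real" where
  "Sw [] = id"
| "Sw (a # w) = Smap a \<circ> Sw w"

definition words :: "nat \<Rightarrow> nat list set" where
  "words n = {w. length w = n \<and> set w \<subseteq> {0, 2}}"

definition cantor :: "real set" where
  "cantor = (\<Inter>n. \<Union>w\<in>words n. Sw w ` {0..1})"

definition Cw :: "nat list \<Rightarrow> real set" where
  "Cw w = Sw w ` cantor"

definition phi :: "real \<Rightarrow> complex" where
  "phi x = indicator cantor x"

definition inner_mu :: "real measure \<Rightarrow> (real \<Rightarrow> complex) \<Rightarrow> (real \<Rightarrow> complex) \<Rightarrow> complex" where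
  "inner_mu M f g = (\<integral>x. cnj (f x) * g x \<partial>M)"

definition L2 :: "real measure \<Rightarrow> (real \<Rightarrow> complex) set" where
  "L2 M = {f. f \<in> borel_measurable M \<and> integrable M (\<lambda>x. (cmod (f x))\<^sup>2)}"

definition Kop :: "real measure \<Rightarrow> nat \<Rightarrow> (real \<Rightarrow> complex) \<Rightarrow> (real \<Rightarrow> complex)" where
  "Kop M m f = (\<lambda>x. \<Sum>u\<in>(\<Union>k\<le>m. words k).
      inner_mu M (\<lambda>y. indicator (Cw u) y) f * indicator (Cw u) x)"

definition Fn :: "real measure \<Rightarrow> nat \<Rightarrow> real measure" where
  "Fn M n = sigma (space M) (Cw ` words n)"

definition En :: "real measure \<Rightarrow> nat \<Rightarrow> (real \<Rightarrow> complex) \<Rightarrow> (real \<Rightarrow> complex)" where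
  "En M n f = (\<lambda>x. complex_of_real (real_cond_exp M (Fn M n) (\<lambda>y. Re (f y)) x)
                 + \<i> * complex_of_real (real_cond_exp M (Fn M n) (\<lambda>y. Im (f y)) x))"

definition dn :: "real measure \<Rightarrow> nat \<Rightarrow> (real \<Rightarrow> complex) \<Rightarrow> (real \<Rightarrow> complex)" where
  "dn M n f = (if n = 0 then En M 0 f else (\<lambda>x. En M n f x - En M (n - 1) f x))"

definition lam :: "nat \<Rightarrow> nat \<Rightarrow> real" where
  "lam n m = (if n = 0 then 2 - (1/2)^m
              else if n \<le> m then (1/2)^(n-1) * (1 - (1/2)^(m - n + 1)) else 0)"

end

theory Submission
  imports Defs
begin

text \<open>
  The atoms \<open>C_w\<close>, \<open>|w| = n\<close>, partition the Cantor set, which carries all of \<open>\<mu>\<close>, and by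
  self-similarity each of them has measure \<open>2^-n\<close>. Hence \<open>E_n f\<close> is the average of \<open>f\<close> over
  the atoms, \<open>E_n f = 2^n \<Sum>|w|=n \<langle>1_{C_w}, f\<rangle> 1_{C_w}\<close>, and therefore
  \<open>K_m = \<Sum>k\<le>m 2^-k E_k\<close>. Writing \<open>E_k = \<Sum>n\<le>k d_n\<close> and summing by parts gives
  \<open>K_m = \<Sum>n\<le>m (\<Sum>k=n..m 2^-k) d_n\<close>, and the geometric sums are the \<open>\<lambda>_{n,m}\<close>.
  Finally \<open>E_k d_n\<close> is \<open>d_n\<close> for \<open>n \<le> k\<close> and \<open>0\<close> otherwise (tower property), so
  \<open>K_m d_n = \<lambda>_{n,m} d_n\<close>.
\<close>

section \<open>Conditional expectation given a finite partition\<close>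

lemma sum_indicator_partition_at:
  fixes c :: "'i \<Rightarrow> 'b::ring_1"
  assumes "finite P" "disjoint_family_on C P" "i \<in> P" "x \<in> C i"
  shows "(\<Sum>j\<in>P. c j * indicator (C j) x) = c i"
proof -
  have "(\<Sum>j\<in>P. c j * indicator (C j) x) = (\<Sum>j\<in>P. if j = i then c j else 0)"
    using assms(2-4) by (intro sum.cong refl) (auto simp: disjoint_family_on_def split: split_indicator)
  then show ?thesis
    using assms(1,3) by simp
qed

lemma sigma_sets_partition_atom:
  assumes "disjoint_family_on C P" "\<And>i. i \<in> P \<Longrightarrow> C i \<subseteq> \<Omega>"
    and "A \<in> sigma_sets \<Omega> (C ` P)" "i \<in> P"
  shows "C i \<subseteq> A \<or> C i \<inter> A = {}"
  using assms(3)
proof induction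
  case (Basic a)
  then obtain j where "j \<in> P" "a = C j" by blast
  then show ?case
    using assms(1,4) by (cases "j = i") (auto simp: disjoint_family_on_def)
next
  case (Compl a)
  then show ?case
    using assms(2,4) by auto
qed blast+

context finite_measure
begin

lemma sigma_finite_subalgebra_sigma:
  assumes "S \<subseteq> sets M"
  shows "sigma_finite_subalgebra M (sigma (space M) S)"
proof -
  have "S \<subseteq> Pow (space M)"
    using assms sets.sets_into_space by blast
  then have "subalgebra M (sigma (space M) S)"
    using sets.sigma_sets_subset[OF assms] by (simp add: subalgebra_def space_measure_of_conv)
  then show ?thesis
    by (intro finite_measure_subalgebra_is_sigma_finite)
      (simp add: finite_measure_subalgebra_def finite_measure_subalgebra_axioms_def finite_measure_axioms)
qed

lemma indicator_partition_AE:
  assumes "finite P" "disjoint_family_on C P" "\<And>i. i \<in> P \<Longrightarrow> C i \<in> sets M"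
    and cover: "AE x in M. x \<in> (\<Union>i\<in>P. C i)"
    and A: "A \<in> sigma_sets (space M) (C ` P)"
  shows "AE x in M. indicator A x = (\<Sum>i\<in>P. (if C i \<subseteq> A then 1 else 0) * indicator (C i) x :: real)"
  using cover
proof eventually_elim
  case (elim x)
  then obtain i where i: "i \<in> P" "x \<in> C i" by blast
  have "C i \<subseteq> A \<or> C i \<inter> A = {}"
    using A assms(2,3) i(1) sets.sets_into_space
    by (intro sigma_sets_partition_atom[of C P "space M"]) auto
  moreover have "(\<Sum>j\<in>P. (if C j \<subseteq> A then 1 else 0) * indicator (C j) x) = (if C i \<subseteq> A then 1 else 0 :: real)"
    by (rule sum_indicator_partition_at[OF assms(1,2) i])
  ultimately show ?case
    using i(2) by (auto split: split_indicator)
qed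

lemma set_integral_partition:
  fixes h :: "'a \<Rightarrow> real"
  assumes fin: "finite P" "disjoint_family_on C P" and sets_C: "\<And>i. i \<in> P \<Longrightarrow> C i \<in> sets M"
    and "AE x in M. x \<in> (\<Union>i\<in>P. C i)"
    and A: "A \<in> sigma_sets (space M) (C ` P)" and h: "integrable M h"
  shows "(\<integral>x. indicator A x * h x \<partial>M)
    = (\<Sum>i\<in>P. if C i \<subseteq> A then \<integral>x. indicator (C i) x * h x \<partial>M else 0)"
proof -
  have "A \<in> sets M"
    using sets.sigma_sets_subset[of "C ` P"] A sets_C by blast
  then have "(\<integral>x. indicator A x * h x \<partial>M)
      = (\<integral>x. (\<Sum>i\<in>P. (if C i \<subseteq> A then 1 else 0) * indicator (C i) x * h x) \<partial>M)"
    using indicator_partition_AE[OF assms(1-5)] h sets_C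
    by (intro integral_cong_AE) (auto elim!: eventually_mono simp: sum_distrib_right)
  also have "\<dots> = (\<Sum>i\<in>P. if C i \<subseteq> A then \<integral>x. indicator (C i) x * h x \<partial>M else 0)"
    using integrable_mult_indicator[OF sets_C h]
    by (subst Bochner_Integration.integral_sum) (auto intro!: sum.cong simp: mult.assoc)
  finally show ?thesis .
qed

text \<open>Atoms of measure zero need no special treatment: there the quotient is \<open>0\<close> by the
  convention \<open>x / 0 = 0\<close>, and so is the integral of \<open>f\<close> over the atom.\<close>

lemma real_cond_exp_partition:
  fixes f :: "'a \<Rightarrow> real"
  assumes fin: "finite P" "disjoint_family_on C P" and sets_C: "\<And>i. i \<in> P \<Longrightarrow> C i \<in> sets M"
    and cover: "AE x in M. x \<in> (\<Union>i\<in>P. C i)" and f: "integrable M f"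
  shows "AE x in M. real_cond_exp M (sigma (space M) (C ` P)) f x
    = (\<Sum>i\<in>P. (\<integral>y. indicator (C i) y * f y \<partial>M) / measure M (C i) * indicator (C i) x)"
proof -
  define F where "F = sigma (space M) (C ` P)"
  define avg where "avg i = (\<integral>y. indicator (C i) y * f y \<partial>M) / measure M (C i)" for i
  define g where "g x = (\<Sum>i\<in>P. avg i * indicator (C i) x)" for x
  have sets_F: "sets F = sigma_sets (space M) (C ` P)"
    unfolding F_def using sets_C sets.sets_into_space by (intro sets_measure_of) blast
  interpret F: sigma_finite_subalgebra M F
    unfolding F_def using sets_C by (intro sigma_finite_subalgebra_sigma) blast
  have int_g: "integrable M g"
    unfolding g_def using sets_C by (intro Bochner_Integration.integrable_sum integrable_real_mult_indicator) auto
  have meas_g: "g \<in> borel_measurable F"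
    unfolding g_def using sets_F by (auto intro!: borel_measurable_sum borel_measurable_times borel_measurable_indicator)
  have cell: "(\<integral>x. indicator (C i) x * g x \<partial>M) = (\<integral>x. indicator (C i) x * f x \<partial>M)"
    if i: "i \<in> P" for i
  proof -
    have "(\<lambda>x. indicator (C i) x * g x) = (\<lambda>x. avg i * indicator (C i) x)"
      using sum_indicator_partition_at[OF fin i] by (auto simp: g_def fun_eq_iff split: split_indicator)
    then have "(\<integral>x. indicator (C i) x * g x \<partial>M) = avg i * measure M (C i)"
      using sets_C[OF i] by simp
    moreover have "(\<integral>x. indicator (C i) x * f x \<partial>M) = 0" if "measure M (C i) = 0"
    proof -
      have "C i \<in> null_sets M"
        using that sets_C[OF i] by (auto simp: emeasure_eq_measure)
      then show ?thesis
        by (intro integral_eq_zero_AE) (auto dest!: AE_not_in elim!: eventually_mono)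
    qed
    ultimately show ?thesis
      by (auto simp: avg_def)
  qed
  have "AE x in M. real_cond_exp M F f x = g x"
  proof (rule F.real_cond_exp_charact)
    fix A assume "A \<in> sets F"
    then have A: "A \<in> sigma_sets (space M) (C ` P)"
      using sets_F by simp
    have "(\<integral>x\<in>A. f x \<partial>M) = (\<Sum>i\<in>P. if C i \<subseteq> A then \<integral>x. indicator (C i) x * f x \<partial>M else 0)"
      using set_integral_partition[OF fin sets_C cover A f] by (simp add: set_lebesgue_integral_def)
    also have "\<dots> = (\<Sum>i\<in>P. if C i \<subseteq> A then \<integral>x. indicator (C i) x * g x \<partial>M else 0)"
      using cell by (intro sum.cong) auto
    also have "\<dots> = (\<integral>x\<in>A. g x \<partial>M)"
      using set_integral_partition[OF fin sets_C cover A int_g] by (simp add: set_lebesgue_integral_def)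
    finally show "(\<integral>x\<in>A. f x \<partial>M) = (\<integral>x\<in>A. g x \<partial>M)" .
  qed (use f int_g meas_g in auto)
  then show ?thesis
    by (simp add: F_def g_def avg_def)
qed

end

section \<open>Summation by parts\<close>

lemma sum_telescope_differences:
  fixes e :: "nat \<Rightarrow> 'a::ab_group_add"
  shows "e k = (\<Sum>n\<le>k. if n = 0 then e 0 else e n - e (n - 1))"
  by (induction k) auto

lemma summation_by_parts_atMost:
  fixes c e :: "nat \<Rightarrow> 'a::comm_ring"
  shows "(\<Sum>k\<le>m. c k * e k) = (\<Sum>n\<le>m. (\<Sum>k=n..m. c k) * (if n = 0 then e 0 else e n - e (n - 1)))"
proof -
  define d where "d n = (if n = 0 then e 0 else e n - e (n - 1))" for n
  have e_eq: "e k = (\<Sum>n\<in>{n\<in>{..m}. n \<le> k}. d n)" if "k \<le> m" for k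
  proof -
    have "{n\<in>{..m}. n \<le> k} = {..k}"
      using that by auto
    then show ?thesis
      using sum_telescope_differences[of e k] by (simp add: d_def)
  qed
  have "(\<Sum>k\<le>m. c k * e k) = (\<Sum>k\<le>m. \<Sum>n\<in>{n\<in>{..m}. n \<le> k}. c k * d n)"
    by (auto simp: e_eq sum_distrib_left intro!: sum.cong)
  also have "\<dots> = (\<Sum>n\<le>m. \<Sum>k\<in>{k\<in>{..m}. n \<le> k}. c k * d n)"
    by (rule sum.swap_restrict) auto
  also have "\<dots> = (\<Sum>n\<le>m. (\<Sum>k=n..m. c k) * d n)"
    unfolding sum_distrib_right by (intro sum.cong refl) auto
  finally show ?thesis
    by (simp add: d_def)
qed

lemma lam_eq_sum: "lam n m = (\<Sum>k=n..m. (1/2) ^ k)"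
proof (cases "n = 0 \<or> m < n")
  case True
  then show ?thesis
    by (auto simp: lam_def sum_gp)
next
  case False
  then obtain i d where n: "n = Suc i" and m: "m = n + d"
    by (metis le_add_diff_inverse not_le not0_implies_Suc)
  have "lam n m = ((1/2) ^ n - (1/2) ^ Suc m) / (1 - 1/2)"
    using n m by (simp add: lam_def power_add field_simps)
  also have "\<dots> = (\<Sum>k=n..m. (1/2) ^ k)"
    using m by (simp only: sum_gp) simp
  finally show ?thesis .
qed

section \<open>The Cantor set\<close>

lemma words_0: "words 0 = {[]}"
  by (auto simp: words_def)

lemma words_Suc: "words (Suc n) = (\<lambda>(a, w). a # w) ` ({0, 2} \<times> words n)"
  by (auto simp: words_def length_Suc_conv)

lemma finite_words: "finite (words n)"
  by (induction n) (auto simp: words_0 words_Suc)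

lemma snoc_in_words: "a \<in> {0, 2} \<Longrightarrow> w \<in> words n \<Longrightarrow> w @ [a] \<in> words (Suc n)"
  by (auto simp: words_def)

lemma disjoint_words: "i \<noteq> j \<Longrightarrow> words i \<inter> words j = {}"
  by (auto simp: words_def)

lemma inj_Smap: "inj (Smap a)"
  by (auto simp: inj_def Smap_def)

lemma Smap_image_unit: "a \<in> {0, 2} \<Longrightarrow> Smap a ` {0..1} \<subseteq> {0..1}"
  by (auto simp: Smap_def)

lemma Smap_images_unit_disjoint: "Smap 0 ` {0..1} \<inter> Smap 2 ` {0..1} = {}"
  by (auto simp: Smap_def)

lemma continuous_on_Smap: "continuous_on S (Smap a)"
  unfolding Smap_def by (intro continuous_intros) auto

lemma continuous_on_Sw: "continuous_on S (Sw w)"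
proof (induction w)
  case (Cons a w)
  then show ?case
    using continuous_on_compose[OF Cons.IH continuous_on_Smap] by simp
qed (simp add: id_def)

lemma Sw_image_unit: "set w \<subseteq> {0, 2} \<Longrightarrow> Sw w ` {0..1} \<subseteq> {0..1}"
proof (induction w)
  case (Cons a w)
  then have "Sw (a # w) ` {0..1} \<subseteq> Smap a ` {0..1}"
    by (auto simp: image_comp[symmetric])
  also have "\<dots> \<subseteq> {0..1}"
    using Cons.prems by (intro Smap_image_unit) auto
  finally show ?case .
qed simp

definition cantor_level :: "nat \<Rightarrow> real set" where
  "cantor_level n = (\<Union>w\<in>words n. Sw w ` {0..1})"

lemma cantor_level_0: "cantor_level 0 = {0..1}"
  by (simp add: cantor_level_def words_0)

lemma cantor_level_Suc: "cantor_level (Suc n) = Smap 0 ` cantor_level n \<union> Smap 2 ` cantor_level n"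
  unfolding cantor_level_def words_Suc by (auto simp: image_comp image_UN)

lemma cantor_level_subset_unit: "cantor_level n \<subseteq> {0..1}"
  using Sw_image_unit by (auto simp: cantor_level_def words_def)

lemma compact_cantor_level: "compact (cantor_level n)"
  unfolding cantor_level_def using finite_words
  by (intro compact_UN) (auto intro!: compact_continuous_image continuous_on_Sw)

lemma cantor_eq_INT_level: "cantor = (\<Inter>n. cantor_level n)"
  unfolding cantor_def cantor_level_def ..

lemma cantor_subset_unit: "cantor \<subseteq> {0..1}"
  using cantor_level_subset_unit cantor_eq_INT_level by blast

lemma compact_cantor: "compact cantor"
  unfolding cantor_eq_INT_level
  by (intro compact_Inter) (auto intro: compact_cantor_level)

lemma INT_Un_separated:
  assumes "\<And>n. A n \<subseteq> L" "\<And>n. B n \<subseteq> R" "L \<inter> R = {}"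
  shows "(\<Inter>n. A n \<union> B n) = (\<Inter>n. A n) \<union> (\<Inter>n. B n)"
proof
  show "(\<Inter>n. A n \<union> B n) \<subseteq> (\<Inter>n. A n) \<union> (\<Inter>n. B n)"
  proof
    fix x assume x: "x \<in> (\<Inter>n. A n \<union> B n)"
    show "x \<in> (\<Inter>n. A n) \<union> (\<Inter>n. B n)"
    proof (cases "x \<in> L")
      case True
      then have "x \<notin> B n" for n
        using assms(2,3) by blast
      then show ?thesis
        using x by blast
    next
      case False
      then have "x \<notin> A n" for n
        using assms(1) by blast
      then show ?thesis
        using x by blast
    qed
  qed
qed blast

lemma cantor_self_similar: "cantor = Smap 0 ` cantor \<union> Smap 2 ` cantor"
proof -
  have "(\<Inter>k. cantor_level (Suc k)) \<subseteq> cantor_level n" for n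
    using cantor_level_subset_unit[of 1] by (cases n) (auto simp: cantor_level_0)
  then have "cantor = (\<Inter>n. cantor_level (Suc n))"
    unfolding cantor_eq_INT_level by blast
  also have "\<dots> = (\<Inter>n. Smap 0 ` cantor_level n) \<union> (\<Inter>n. Smap 2 ` cantor_level n)"
    unfolding cantor_level_Suc using cantor_level_subset_unit
    by (intro INT_Un_separated[OF _ _ Smap_images_unit_disjoint]) (auto intro: image_mono)
  also have "\<dots> = Smap 0 ` cantor \<union> Smap 2 ` cantor"
    using image_INT[of "Smap _" UNIV UNIV cantor_level 0] inj_Smap
    by (simp add: cantor_eq_INT_level)
  finally show ?thesis .
qed

lemma Cw_Nil: "Cw [] = cantor"
  by (simp add: Cw_def)

lemma Cw_Cons: "Cw (a # w) = Smap a ` Cw w"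
  by (simp add: Cw_def image_comp)

lemma Sw_snoc: "Sw (w @ [a]) = Sw w \<circ> Smap a"
  by (induction w) auto

lemma Cw_split: "Cw w = Cw (w @ [0]) \<union> Cw (w @ [2])"
  using arg_cong[OF cantor_self_similar, of "image (Sw w)"]
  by (simp add: Cw_def Sw_snoc image_comp image_Un)

lemma Cw_subset_unit: "set w \<subseteq> {0, 2} \<Longrightarrow> Cw w \<subseteq> {0..1}"
  using Sw_image_unit[of w] cantor_subset_unit by (auto simp: Cw_def)

lemma compact_Cw: "compact (Cw w)"
  unfolding Cw_def by (intro compact_continuous_image continuous_on_Sw compact_cantor)

lemma Cw_in_borel: "Cw w \<in> sets borel"
  using compact_Cw by (intro borel_closed compact_imp_closed)

lemma disjoint_family_Cw: "disjoint_family_on Cw (words n)"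
proof (induction n)
  case 0
  then show ?case
    by (simp add: words_0 disjoint_family_on_def)
next
  case (Suc n)
  show ?case
    unfolding disjoint_family_on_def
  proof (intro ballI impI)
    fix u v assume "u \<in> words (Suc n)" "v \<in> words (Suc n)" "u \<noteq> v"
    then obtain a b u' v' where u: "u = a # u'" "a \<in> {0, 2}" "u' \<in> words n"
      and v: "v = b # v'" "b \<in> {0, 2}" "v' \<in> words n" and "u \<noteq> v"
      by (auto simp: words_Suc)
    show "Cw u \<inter> Cw v = {}"
    proof (cases "a = b")
      case True
      then have "Cw u' \<inter> Cw v' = {}"
        using Suc.IH u v \<open>u \<noteq> v\<close> by (auto simp: disjoint_family_on_def)
      then show ?thesis
        using True u v by (simp add: Cw_Cons image_Int[OF inj_Smap, symmetric])
    next
      case False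
      have "Cw u \<subseteq> Smap a ` {0..1}" "Cw v \<subseteq> Smap b ` {0..1}"
        using u v Cw_subset_unit by (auto simp: Cw_Cons words_def intro!: image_mono)
      then show ?thesis
        using False u(2) v(2) Smap_images_unit_disjoint by blast
    qed
  qed
qed

lemma UN_Cw_words: "(\<Union>w\<in>words n. Cw w) = cantor"
proof (induction n)
  case 0
  then show ?case
    by (simp add: words_0 Cw_Nil)
next
  case (Suc n)
  have "(\<Union>w\<in>words (Suc n). Cw w) = Smap 0 ` (\<Union>w\<in>words n. Cw w) \<union> Smap 2 ` (\<Union>w\<in>words n. Cw w)"
    by (auto simp: words_Suc Cw_Cons) blast+
  then show ?case
    using Suc.IH cantor_self_similar by simp
qed

section \<open>The Cantor measure\<close>

lemma Smap_measurable [measurable]: "Smap a \<in> borel_measurable borel"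
  unfolding Smap_def by measurable

locale cantor_measure = prob_space M for M :: "real measure" +
  assumes sets_eq_borel: "sets M = sets borel"
    and measure_unit_interval: "emeasure M {0..1} = 1"
    and self_similar: "\<forall>A\<in>sets borel.
      emeasure M A = emeasure M (Smap 0 -` A) / 2 + emeasure M (Smap 2 -` A) / 2"
begin

lemma space_eq_UNIV [simp]: "space M = UNIV"
  using sets_eq_imp_space_eq[OF sets_eq_borel] by simp

lemma sets_iff_borel: "A \<in> sets M \<longleftrightarrow> A \<in> sets borel"
  using sets_eq_borel by simp

lemma measure_self_similar:
  assumes A: "A \<in> sets borel"
  shows "measure M A = measure M (Smap 0 -` A) / 2 + measure M (Smap 2 -` A) / 2"
proof -
  have "ennreal (measure M A) = ennreal (measure M (Smap 0 -` A) / 2) + ennreal (measure M (Smap 2 -` A) / 2)"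
    using self_similar A by (simp add: emeasure_eq_measure ennreal_divide_numeral)
  then show ?thesis
    by (simp flip: ennreal_plus)
qed

lemma AE_in_unit_interval: "AE x in M. x \<in> {0..1}"
  using measure_unit_interval by (intro AE_prob_1) (auto simp: sets_iff_borel emeasure_eq_measure)

lemma measure_outside_unit_interval:
  assumes "A \<inter> {0..1} = {}"
  shows "measure M A = 0"
proof -
  have "AE x in M. x \<notin> A"
    using AE_in_unit_interval by eventually_elim (use assms in auto)
  then show ?thesis
    using emeasure_eq_0_AE[of "\<lambda>x. x \<in> A" M] by (simp add: measure_def)
qed

lemma measure_cantor_level: "measure M (cantor_level n) = 1"
proof (induction n)
  case 0
  then show ?case
    using measure_unit_interval by (simp add: cantor_level_0 emeasure_eq_measure)
next
  case (Suc n)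
  have borel: "cantor_level (Suc n) \<in> sets borel"
    using compact_cantor_level by (intro borel_closed compact_imp_closed)
  have "measure M (Smap a -` cantor_level (Suc n)) = 1" if "a \<in> {0, 2}" for a
  proof (rule antisym)
    have "cantor_level n \<subseteq> Smap a -` cantor_level (Suc n)"
      using that by (auto simp: cantor_level_Suc)
    then have "measure M (cantor_level n) \<le> measure M (Smap a -` cantor_level (Suc n))"
      using measurable_sets_borel[OF Smap_measurable borel]
      by (intro finite_measure_mono) (auto simp: sets_iff_borel)
    then show "1 \<le> measure M (Smap a -` cantor_level (Suc n))"
      using Suc.IH by simp
  qed simp
  then show ?case
    using measure_self_similar[OF borel] by simp
qed

lemma AE_in_cantor: "AE x in M. x \<in> cantor"
proof -
  have "AE x in M. x \<in> cantor_level n" for n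
    using compact_cantor_level measure_cantor_level
    by (intro AE_prob_1) (auto simp: sets_iff_borel intro: borel_closed compact_imp_closed)
  then show ?thesis
    by (simp add: cantor_eq_INT_level AE_all_countable)
qed

lemma measure_Cw: "set w \<subseteq> {0, 2} \<Longrightarrow> measure M (Cw w) = (1/2) ^ length w"
proof (induction w)
  case Nil
  then show ?case
    using AE_in_cantor compact_cantor
    by (simp add: Cw_Nil prob_eq_1 sets_iff_borel borel_closed compact_imp_closed)
next
  case (Cons a w)
  then have a: "a \<in> {0, 2}" and w: "set w \<subseteq> {0, 2}"
    by auto
  have same: "Smap a -` Cw (a # w) = Cw w"
    by (simp add: Cw_Cons inj_vimage_image_eq inj_Smap)
  have other: "measure M (Smap b -` Cw (a # w)) = 0" if "b \<in> {0, 2}" "b \<noteq> a" for b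
  proof (rule measure_outside_unit_interval)
    have "Smap b ` {0..1} \<inter> Smap a ` {0..1} = {}"
      using Smap_images_unit_disjoint a that by auto
    then show "Smap b -` Cw (a # w) \<inter> {0..1} = {}"
      using Cw_subset_unit[OF w] by (auto simp: Cw_Cons)
  qed
  have "measure M (Cw (a # w)) = measure M (Cw w) / 2"
    using measure_self_similar[OF Cw_in_borel, of "a # w"] a same other[of 0] other[of 2] by auto
  then show ?case
    using Cons.IH[OF w] by simp
qed

section \<open>The conditional expectations \<open>E_n\<close> and the operators \<open>K_m\<close>\<close>

lemma L2_imp_integrable:
  assumes "f \<in> L2 M"
  shows "integrable M f"
proof -
  have meas: "f \<in> borel_measurable M" and square: "integrable M (\<lambda>x. (cmod (f x))\<^sup>2)"
    using assms by (auto simp: L2_def)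
  have "(\<lambda>x. cmod (f x)) \<in> borel_measurable M"
    using meas by measurable
  then have "integrable M (\<lambda>x. cmod (f x))"
    using square by (rule square_integrable_imp_integrable)
  then show ?thesis
    using integrable_norm_iff[OF meas] by simp
qed

lemma sets_Fn: "sets (Fn M n) = sigma_sets UNIV (Cw ` words n)"
  by (simp add: Fn_def)

lemma space_Fn [simp]: "space (Fn M n) = UNIV"
  by (simp add: Fn_def space_measure_of_conv)

lemma sigma_finite_subalgebra_Fn: "sigma_finite_subalgebra M (Fn M n)"
  unfolding Fn_def using Cw_in_borel
  by (intro sigma_finite_subalgebra_sigma) (auto simp: sets_iff_borel)

lemma sets_Fn_mono:
  assumes "k \<le> j"
  shows "sets (Fn M k) \<subseteq> sets (Fn M j)"
proof (rule lift_Suc_mono_le[of "\<lambda>n. sets (Fn M n)", OF _ assms])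
  fix n
  have "Cw w \<in> sigma_sets UNIV (Cw ` words (Suc n))" if w: "w \<in> words n" for w
  proof -
    have "Cw (w @ [a]) \<in> sigma_sets UNIV (Cw ` words (Suc n))" if "a \<in> {0, 2}" for a
      using snoc_in_words[OF that w] by (intro sigma_sets.Basic) blast
    from sigma_sets_Un[OF this[of 0] this[of 2]] show ?thesis
      by (simp flip: Cw_split)
  qed
  then show "sets (Fn M n) \<subseteq> sets (Fn M (Suc n))"
    unfolding sets_Fn by (intro sigma_sets_mono) auto
qed

lemma real_cond_exp_Fn:
  fixes f :: "real \<Rightarrow> real"
  assumes "integrable M f"
  shows "AE x in M. real_cond_exp M (Fn M n) f x
    = 2 ^ n * (\<Sum>w\<in>words n. (\<integral>y. indicator (Cw w) y * f y \<partial>M) * indicator (Cw w) x)"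
proof -
  have "AE x in M. real_cond_exp M (Fn M n) f x
      = (\<Sum>w\<in>words n. (\<integral>y. indicator (Cw w) y * f y \<partial>M) / measure M (Cw w) * indicator (Cw w) x)"
    unfolding Fn_def using finite_words disjoint_family_Cw AE_in_cantor Cw_in_borel assms
    by (intro real_cond_exp_partition) (auto simp: sets_iff_borel UN_Cw_words)
  moreover have "(\<Sum>w\<in>words n. (\<integral>y. indicator (Cw w) y * f y \<partial>M) / measure M (Cw w) * indicator (Cw w) x)
      = 2 ^ n * (\<Sum>w\<in>words n. (\<integral>y. indicator (Cw w) y * f y \<partial>M) * indicator (Cw w) x)" for x
    unfolding sum_distrib_left using measure_Cw
    by (intro sum.cong refl) (auto simp: words_def power_one_over)
  ultimately show ?thesis
    by (elim eventually_mono) (simp only:)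
qed

lemma inner_mu_indicator:
  assumes "A \<in> sets M" "integrable M f"
  shows "Re (inner_mu M (indicator A) f) = (\<integral>y. indicator A y * Re (f y) \<partial>M)"
    and "Im (inner_mu M (indicator A) f) = (\<integral>y. indicator A y * Im (f y) \<partial>M)"
proof -
  have "inner_mu M (indicator A) f = (\<integral>y. indicator A y *\<^sub>R f y \<partial>M)"
    unfolding inner_mu_def by (intro Bochner_Integration.integral_cong) (auto split: split_indicator)
  then show "Re (inner_mu M (indicator A) f) = (\<integral>y. indicator A y * Re (f y) \<partial>M)"
    and "Im (inner_mu M (indicator A) f) = (\<integral>y. indicator A y * Im (f y) \<partial>M)"
    using integral_Re[OF integrable_mult_indicator[OF assms]]
      integral_Im[OF integrable_mult_indicator[OF assms]] by simp_all
qed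

lemma En_Fn:
  assumes f: "integrable M f"
  shows "AE x in M. En M n f x = 2 ^ n * (\<Sum>w\<in>words n. inner_mu M (indicator (Cw w)) f * indicator (Cw w) x)"
proof -
  have "AE x in M. real_cond_exp M (Fn M n) (\<lambda>y. Re (f y)) x
    = 2 ^ n * (\<Sum>w\<in>words n. (\<integral>y. indicator (Cw w) y * Re (f y) \<partial>M) * indicator (Cw w) x)"
    using f by (intro real_cond_exp_Fn) auto
  moreover have "AE x in M. real_cond_exp M (Fn M n) (\<lambda>y. Im (f y)) x
    = 2 ^ n * (\<Sum>w\<in>words n. (\<integral>y. indicator (Cw w) y * Im (f y) \<partial>M) * indicator (Cw w) x)"
    using f by (intro real_cond_exp_Fn) auto
  ultimately show ?thesis
  proof eventually_elim
    case (elim x)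
    show ?case
      using elim inner_mu_indicator[OF _ f] Cw_in_borel
      by (intro complex_eqI) (simp_all add: En_def sets_iff_borel of_real_indicator[where 'a=complex, symmetric])
  qed
qed

lemma Kop_eq_sum_En:
  assumes f: "integrable M f"
  shows "AE x in M. Kop M m f x = (\<Sum>k\<le>m. complex_of_real ((1/2) ^ k) * En M k f x)"
proof -
  have Kop_levels: "Kop M m f x
      = (\<Sum>k\<le>m. \<Sum>w\<in>words k. inner_mu M (indicator (Cw w)) f * indicator (Cw w) x)" for x
    unfolding Kop_def by (rule sum.UNION_disjoint) (auto simp: finite_words disjoint_words)
  have "AE x in M. \<forall>k\<in>{..m}.
      En M k f x = 2 ^ k * (\<Sum>w\<in>words k. inner_mu M (indicator (Cw w)) f * indicator (Cw w) x)"
    using En_Fn[OF f] by (intro AE_finite_allI) auto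
  then show ?thesis
    by (elim eventually_mono) (simp add: Kop_levels power_one_over)
qed

lemma integrable_En: "integrable M f \<Longrightarrow> integrable M (En M n f)"
proof -
  interpret sigma_finite_subalgebra M "Fn M n"
    by (rule sigma_finite_subalgebra_Fn)
  show "integrable M f \<Longrightarrow> integrable M (En M n f)"
    unfolding En_def
    by (intro Bochner_Integration.integrable_add integrable_mult_right integrable_of_real real_cond_exp_int) auto
qed

lemma En_diff:
  assumes "integrable M f" "integrable M g"
  shows "AE x in M. En M n (\<lambda>x. f x - g x) x = En M n f x - En M n g x"
proof -
  interpret sigma_finite_subalgebra M "Fn M n"
    by (rule sigma_finite_subalgebra_Fn)
  have "AE x in M. real_cond_exp M (Fn M n) (\<lambda>x. Re (f x) - Re (g x)) x
      = real_cond_exp M (Fn M n) (\<lambda>x. Re (f x)) x - real_cond_exp M (Fn M n) (\<lambda>x. Re (g x)) x"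
    using assms by (intro real_cond_exp_diff) auto
  moreover have "AE x in M. real_cond_exp M (Fn M n) (\<lambda>x. Im (f x) - Im (g x)) x
      = real_cond_exp M (Fn M n) (\<lambda>x. Im (f x)) x - real_cond_exp M (Fn M n) (\<lambda>x. Im (g x)) x"
    using assms by (intro real_cond_exp_diff) auto
  ultimately show ?thesis
    by eventually_elim (simp add: En_def complex_eq_iff)
qed

lemma real_cond_exp_Fn_tower:
  assumes u: "integrable M u"
  shows "AE x in M. real_cond_exp M (Fn M k) (real_cond_exp M (Fn M j) u) x
    = real_cond_exp M (Fn M (min k j)) u x"
proof -
  interpret Fk: sigma_finite_subalgebra M "Fn M k"
    by (rule sigma_finite_subalgebra_Fn)
  interpret Fj: sigma_finite_subalgebra M "Fn M j"
    by (rule sigma_finite_subalgebra_Fn)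
  have nested: "subalgebra (Fn M j') (Fn M k')" if "k' \<le> j'" for k' j'
    using sets_Fn_mono[OF that] by (simp add: subalgebra_def)
  show ?thesis
  proof (cases "k \<le> j")
    case True
    then have "min k j = k"
      by simp
    then show ?thesis
      using Fk.real_cond_exp_nested_subalg[OF Fj.subalg nested[OF True] u] by (simp only:)
  next
    case False
    then have "min k j = j" and "real_cond_exp M (Fn M j) u \<in> borel_measurable (Fn M k)"
      using measurable_from_subalg[OF nested[of j k] borel_measurable_cond_exp] by simp_all
    then show ?thesis
      using Fk.real_cond_exp_F_meas[OF Fj.real_cond_exp_int(1)[OF u]] by (simp only:)
  qed
qed

lemma En_tower:
  assumes "integrable M g"
  shows "AE x in M. En M k (En M j g) x = En M (min k j) g x"
proof -
  have Re_En: "(\<lambda>y. Re (En M j g y)) = real_cond_exp M (Fn M j) (\<lambda>y. Re (g y))"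
    and Im_En: "(\<lambda>y. Im (En M j g y)) = real_cond_exp M (Fn M j) (\<lambda>y. Im (g y))"
    by (simp_all add: En_def fun_eq_iff)
  have "AE x in M. real_cond_exp M (Fn M k) (real_cond_exp M (Fn M j) (\<lambda>y. Re (g y))) x
      = real_cond_exp M (Fn M (min k j)) (\<lambda>y. Re (g y)) x"
    using assms by (intro real_cond_exp_Fn_tower) auto
  moreover have "AE x in M. real_cond_exp M (Fn M k) (real_cond_exp M (Fn M j) (\<lambda>y. Im (g y))) x
      = real_cond_exp M (Fn M (min k j)) (\<lambda>y. Im (g y)) x"
    using assms by (intro real_cond_exp_Fn_tower) auto
  ultimately show ?thesis
    by eventually_elim (simp add: En_def[of M k "En M j g"] Re_En Im_En, simp add: En_def)
qed

lemma En_dn: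
  assumes g: "integrable M g"
  shows "AE x in M. En M k (dn M n g) x = (if n \<le> k then dn M n g x else 0)"
proof (cases "n = 0")
  case True
  then show ?thesis
    using En_tower[OF g, of k 0] by (simp add: dn_def)
next
  case False
  have "AE x in M. En M k (dn M n g) x = En M k (En M n g) x - En M k (En M (n - 1) g) x"
    using False integrable_En[OF g] En_diff[of "En M n g" "En M (n - 1) g" k] by (simp add: dn_def)
  with En_tower[OF g, of k n] En_tower[OF g, of k "n - 1"] show ?thesis
    by eventually_elim (use False in \<open>auto simp: dn_def min_def\<close>)
qed

lemma Kop_eigen_expansion:
  assumes "f \<in> L2 M"
  shows "AE x in M. Kop M m f x = complex_of_real (2 - (1/2)^m) * dn M 0 f x
    + (\<Sum>n=1..m. complex_of_real ((1/2)^(n-1) * (1 - (1/2)^(m-n+1))) * dn M n f x)"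
  using Kop_eq_sum_En[OF L2_imp_integrable[OF assms], of m]
proof eventually_elim
  case (elim x)
  have "Kop M m f x = (\<Sum>k\<le>m. complex_of_real ((1/2)^k) * En M k f x)"
    by (rule elim)
  also have "\<dots> = (\<Sum>n\<le>m. (\<Sum>k=n..m. complex_of_real ((1/2)^k))
      * (if n = 0 then En M 0 f x else En M n f x - En M (n - 1) f x))"
    by (rule summation_by_parts_atMost)
  also have "\<dots> = (\<Sum>n\<le>m. complex_of_real (lam n m) * dn M n f x)"
    by (intro sum.cong refl) (simp add: lam_eq_sum dn_def)
  also have "\<dots> = complex_of_real (lam 0 m) * dn M 0 f x + (\<Sum>n=1..m. complex_of_real (lam n m) * dn M n f x)"
    by (simp add: atMost_atLeast0 sum.atLeast_Suc_atMost)
  finally show ?case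
    by (simp add: lam_def)
qed

lemma Kop_dn_eq_lam:
  assumes "g \<in> L2 M"
  shows "AE x in M. Kop M m (dn M n g) x = complex_of_real (lam n m) * dn M n g x"
proof -
  have lam_sum: "lam n m = (\<Sum>k\<le>m. if n \<le> k then (1/2)^k else 0)"
    unfolding lam_eq_sum sum.inter_filter[OF finite_atMost, symmetric]
    by (intro sum.cong) auto
  have g: "integrable M g"
    using assms by (rule L2_imp_integrable)
  then have "integrable M (dn M n g)"
    by (simp add: dn_def integrable_En)
  then have "AE x in M. Kop M m (dn M n g) x = (\<Sum>k\<le>m. complex_of_real ((1/2)^k) * En M k (dn M n g) x)"
    by (rule Kop_eq_sum_En)
  moreover have "AE x in M. \<forall>k\<in>{..m}. En M k (dn M n g) x = (if n \<le> k then dn M n g x else 0)"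
    using En_dn[OF g] by (intro AE_finite_allI) auto
  ultimately show ?thesis
    by eventually_elim (auto simp: lam_sum sum_distrib_right intro!: sum.cong)
qed

lemma phi_eq_indicator: "phi = indicator cantor"
  by (simp add: fun_eq_iff phi_def)

lemma En_0_eq_inner_phi:
  assumes "integrable M f"
  shows "AE x in M. En M 0 f x = inner_mu M phi f * phi x"
  using En_Fn[OF assms, of 0] by (simp add: words_0 Cw_Nil phi_eq_indicator)

lemma inner_mu_phi_phi: "inner_mu M phi phi = 1"
proof -
  have "inner_mu M phi phi = (\<integral>x. complex_of_real (indicator cantor x) \<partial>M)"
    unfolding inner_mu_def phi_eq_indicator
    by (intro Bochner_Integration.integral_cong) (auto split: split_indicator)
  also have "\<dots> = complex_of_real (measure M (Cw []))"
    by (simp add: Cw_Nil)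
  finally show ?thesis
    using measure_Cw[of "[]"] by simp
qed

lemma En_0_phi: "AE x in M. En M 0 phi x = phi x"
proof -
  have "cantor \<in> sets M"
    using compact_cantor by (auto simp: sets_iff_borel intro: borel_closed compact_imp_closed)
  then have "integrable M (\<lambda>x. complex_of_real (indicator cantor x))"
    by (intro integrable_of_real integrable_real_indicator) (auto simp: emeasure_eq_measure)
  then have "integrable M phi"
    by (simp add: phi_eq_indicator of_real_indicator)
  then show ?thesis
    using En_0_eq_inner_phi[of phi] by (simp add: inner_mu_phi_phi)
qed

end

theorem proposition3p4:
  fixes M :: "real measure"
  assumes prob: "prob_space M"
    and borel: "sets M = sets borel"
    and unit: "emeasure M {0..1} = 1"
    and selfsim: "\<forall>A\<in>sets borel. emeasure M A =
        emeasure M (Smap 0 -` A) / 2 + emeasure M (Smap 2 -` A) / 2"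
  shows
    "(\<forall>m. \<forall>f\<in>L2 M. AE x in M.
        Kop M m f x = complex_of_real (2 - (1/2)^m) * dn M 0 f x
          + (\<Sum>n=1..m. complex_of_real ((1/2)^(n-1) * (1 - (1/2)^(m-n+1))) * dn M n f x))
   \<and> (\<forall>f\<in>L2 M. \<exists>c. AE x in M. En M 0 f x = c * phi x)
   \<and> (AE x in M. En M 0 phi x = phi x)
   \<and> (\<forall>m n. \<forall>g\<in>L2 M. AE x in M.
        Kop M m (dn M n g) x = complex_of_real (lam n m) * dn M n g x)"
proof -
  interpret cantor_measure M
    by (rule cantor_measure.intro[OF prob cantor_measure_axioms.intro[OF borel unit selfsim]])
  show ?thesis
    using Kop_eigen_expansion En_0_eq_inner_phi[OF L2_imp_integrable] En_0_phi Kop_dn_eq_lam by blast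
qed

end
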